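(* Let $N$ be a finite set, $r\notin N$, $V=N\cup\{r\}$, and let $G=(V,E)$ be the complete graph on $V$ with edge weights $w:E\to\mathbb{R}$ taking the distinct values $w_1<\dots<w_k$. If the spanning tree game on $G$ is submodular, then for every $i<k$ the graph $G_i$ contains (a) no bad hole and (b) no bad induced diamond.
   Context: For $S\subseteq V$, $\mathrm{mst}(S)$ is the weight of a minimum spanning tree of $G[S]$. The spanning tree game on $G$ has player set $N$ and $\nu(S)=\mathrm{mst}(S\cup\{r\})$; it is submodular if $\nu(A)+\nu(B)\ge\nu(A\cup B)+\nu(A\cap B)$ for all $A,B\subseteq N$. $E_i=\{e\in E:w(e)\le w_i\}$, $G_i=(V,E_i)$. A hole is an induced cycle with at least four vertices; a hole in $G_i$ is bad if it contains a vertex $x\neq r$ with $rx\notin E_i$. A diamond is $K_4$ minus one edge; its tips are its two vertices of degree 2. For a cycle $C$ and a chord $f=xy$ of $C$, with $P_1,P_2$ the two $x$-$y$ paths of $C$, $f$ covers $C$ if $w(f)\ge w(e)$ for all $e\in E(P_1)$ or for all $e\in E(P_2)$; $C$ is well-covered if covered by all its chords. An induced diamond in $G_i$ is bad if its Hamiltonian cycle is well-covered (its chord being the edge joining the two non-tip vertices) and at least one of its tips $x\ne r$ satisfies $rx\notin E_i$. *)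

theory Defs
  imports Complex_Main
begin

text \<open>Undirected edges are 2-element vertex sets. The complete graph on a vertex set S has
  edge set edges_on S.\<close>
definition edges_on :: "'a set \<Rightarrow> 'a set set" where
  "edges_on S = {e. e \<subseteq> S \<and> card e = 2}"

definition adj :: "'a set set \<Rightarrow> 'a \<Rightarrow> 'a \<Rightarrow> bool" where
  "adj T u v \<longleftrightarrow> {u, v} \<in> T"

text \<open>T is a spanning tree of the complete graph G[S]: a connected, acyclic edge set on S
  (acyclic: no edge lies on a cycle, i.e. deleting any edge disconnects its endpoints).\<close>
definition spanning_tree :: "'a set \<Rightarrow> 'a set set \<Rightarrow> bool" where
  "spanning_tree S T \<longleftrightarrow>
     T \<subseteq> edges_on S \<and>
     (\<forall>x\<in>S. \<forall>y\<in>S. (adj T)\<^sup>*\<^sup>* x y) \<and>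
     (\<forall>e\<in>T. \<forall>x y. e = {x, y} \<longrightarrow> \<not> (adj (T - {e}))\<^sup>*\<^sup>* x y)"

definition mst :: "('a set \<Rightarrow> real) \<Rightarrow> 'a set \<Rightarrow> real" where
  "mst w S = Min ((\<lambda>T. \<Sum>e\<in>T. w e) ` {T. spanning_tree S T})"

definition spanning_tree_game :: "'a \<Rightarrow> ('a set \<Rightarrow> real) \<Rightarrow> 'a set \<Rightarrow> real" where
  "spanning_tree_game r w S = mst w (S \<union> {r})"

definition submodular_game :: "'a set \<Rightarrow> ('a set \<Rightarrow> real) \<Rightarrow> bool" where
  "submodular_game N \<nu> \<longleftrightarrow>
     (\<forall>A B. A \<subseteq> N \<longrightarrow> B \<subseteq> N \<longrightarrow> \<nu> A + \<nu> B \<ge> \<nu> (A \<union> B) + \<nu> (A \<inter> B))"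

text \<open>The distinct weight values w_1 < ... < w_k (1-indexed) of the edges of the complete graph on V.\<close>
definition weight_value :: "'a set \<Rightarrow> ('a set \<Rightarrow> real) \<Rightarrow> nat \<Rightarrow> real" where
  "weight_value V w i = sorted_list_of_set (w ` edges_on V) ! (i - 1)"

definition level_edges :: "'a set \<Rightarrow> ('a set \<Rightarrow> real) \<Rightarrow> nat \<Rightarrow> 'a set set" where
  "level_edges V w i = {e \<in> edges_on V. w e \<le> weight_value V w i}"

text \<open>A hole in the graph (V,F): an induced cycle cs (list of its distinct vertices in cyclic
  order) with at least four vertices.\<close>
definition hole :: "'a set \<Rightarrow> 'a set set \<Rightarrow> 'a list \<Rightarrow> bool" where
  "hole V F cs \<longleftrightarrow>
     distinct cs \<and> length cs \<ge> 4 \<and> set cs \<subseteq> V \<and>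
     (\<forall>i<length cs. \<forall>j<length cs. i \<noteq> j \<longrightarrow>
        ({cs ! i, cs ! j} \<in> F \<longleftrightarrow>
          (j = Suc i mod length cs \<or> i = Suc j mod length cs)))"

definition bad_hole :: "'a set \<Rightarrow> 'a \<Rightarrow> 'a set set \<Rightarrow> 'a list \<Rightarrow> bool" where
  "bad_hole V r F cs \<longleftrightarrow> hole V F cs \<and> (\<exists>x\<in>set cs. x \<noteq> r \<and> {r, x} \<notin> F)"

definition induced_diamond :: "'a set \<Rightarrow> 'a set set \<Rightarrow> 'a \<Rightarrow> 'a \<Rightarrow> 'a \<Rightarrow> 'a \<Rightarrow> bool" where
  "induced_diamond V F a b c d \<longleftrightarrow>
     distinct [a, b, c, d] \<and> {a, b, c, d} \<subseteq> V \<and>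
     {a, c} \<in> F \<and> {a, d} \<in> F \<and> {b, c} \<in> F \<and> {b, d} \<in> F \<and> {c, d} \<in> F \<and> {a, b} \<notin> F"

text \<open>For the Hamiltonian cycle a-c-b-d-a of a diamond the two c-d paths are
  c-a-d and c-b-d.\<close>
definition chord_covers :: "('a set \<Rightarrow> real) \<Rightarrow> 'a set \<Rightarrow> 'a set list \<Rightarrow> 'a set list \<Rightarrow> bool" where
  "chord_covers w f P1 P2 \<longleftrightarrow> (\<forall>e\<in>set P1. w f \<ge> w e) \<or> (\<forall>e\<in>set P2. w f \<ge> w e)"

text \<open>The Hamiltonian cycle a-c-b-d-a of an induced diamond has the single chord {c,d} in (V,F),
  so it is well-covered iff this chord covers it.\<close>
definition bad_diamond :: "'a set \<Rightarrow> 'a \<Rightarrow> ('a set \<Rightarrow> real) \<Rightarrow> 'a set set \<Rightarrow> 'a \<Rightarrow> 'a \<Rightarrow> 'a \<Rightarrow> 'a \<Rightarrow> bool" where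
  "bad_diamond V r w F a b c d \<longleftrightarrow>
     induced_diamond V F a b c d \<and>
     chord_covers w {c, d} [{c, a}, {a, d}] [{c, b}, {b, d}] \<and>
     (\<exists>x\<in>{a, b}. x \<noteq> r \<and> {r, x} \<notin> F)"

end

theory Submission
  imports Defs "HOL-Number_Theory.Cong"
begin

(* Kruskal's algorithm expresses mst(X) through the numbers c_j(X) of components of the threshold
   graphs G_j[X] (see kruskal_cost). For r in Y and p, q outside Y, submodularity of the game on
   Y + p and Y + q then says that the sum over j of (w_(j+1) - w_j) times
   c_j(Y + p) + c_j(Y + q) - c_j(Y + p + q) - c_j(Y) is nonnegative. The number of components is
   supermodular in the edge set, so every term is nonpositive once the edge pq is redundant, i.e.
   some s in Y has ps and qs no heavier than pq; and the term at level i is negative if p joins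
   two vertices u, v of Y that are disconnected in G_i[Y] and both adjacent to q. A bad hole with
   x not adjacent to r and neighbours y, z gives this configuration for
   Y = (hole + r) - {y, z}, p = y, q = z, u = x and v the other neighbour of z; a bad diamond with
   tip a not adjacent to r gives it for Y = {a, b, r}, p = c, q = d, u = a, v = b. *)

section \<open>Connectivity and forests\<close>

definition reach :: "'a set set \<Rightarrow> 'a \<Rightarrow> 'a \<Rightarrow> bool" where
  "reach F = (adj F)\<^sup>*\<^sup>*"

definition component :: "'a set set \<Rightarrow> 'a \<Rightarrow> 'a set" where
  "component F u = {v. reach F u v}"

definition num_components :: "'a set \<Rightarrow> 'a set set \<Rightarrow> nat" where
  "num_components X F = card (component F ` X)"

definition forest :: "'a set set \<Rightarrow> bool" where
  "forest F \<longleftrightarrow> (\<forall>e\<in>F. \<forall>x y. e = {x, y} \<longrightarrow> \<not> reach (F - {e}) x y)"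

lemma spanning_tree_iff_forest:
  "spanning_tree X T \<longleftrightarrow> T \<subseteq> edges_on X \<and> (\<forall>x\<in>X. \<forall>y\<in>X. reach T x y) \<and> forest T"
  unfolding spanning_tree_def forest_def reach_def ..

lemma finite_edges_on: "finite X \<Longrightarrow> finite (edges_on X)"
  unfolding edges_on_def by (rule finite_subset[of _ "Pow X"]) auto

lemma edges_on_mono: "X \<subseteq> Y \<Longrightarrow> edges_on X \<subseteq> edges_on Y"
  unfolding edges_on_def by blast

lemma doubleton_in_edges_on: "a \<noteq> b \<Longrightarrow> a \<in> X \<Longrightarrow> b \<in> X \<Longrightarrow> {a, b} \<in> edges_on X"
  unfolding edges_on_def by auto

lemma edges_onE:
  assumes "e \<in> edges_on X"
  obtains a b where "e = {a, b}" "a \<noteq> b" "a \<in> X" "b \<in> X"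
  using assms unfolding edges_on_def by (auto simp: card_2_iff)

lemma reach_refl [simp]: "reach F u u"
  by (simp add: reach_def)

lemma reach_edge: "{u, v} \<in> F \<Longrightarrow> reach F u v"
  by (simp add: reach_def adj_def r_into_rtranclp)

lemma reach_trans: "reach F u v \<Longrightarrow> reach F v x \<Longrightarrow> reach F u x"
  unfolding reach_def by (rule rtranclp_trans)

lemma reach_sym: "reach F u v \<Longrightarrow> reach F v u"
  unfolding reach_def
proof (induction rule: rtranclp_induct)
  case (step y z)
  then have "adj F z y" by (simp add: adj_def insert_commute)
  then show ?case using step(3) by (rule converse_rtranclp_into_rtranclp)
qed simp

lemma reach_mono: "reach F u v \<Longrightarrow> F \<subseteq> F' \<Longrightarrow> reach F' u v"
  unfolding reach_def adj_def by (rule mono_rtranclp[rule_format]) auto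

lemma reach_via:
  assumes "reach H u v" and "\<And>a b. {a, b} \<in> H \<Longrightarrow> reach F a b"
  shows "reach F u v"
  using assms(1) unfolding reach_def[of H]
proof (induction rule: rtranclp_induct)
  case (step y z) then show ?case using assms(2) by (meson adj_def reach_trans)
qed simp

lemma reach_path:
  assumes "\<And>l. a \<le> l \<Longrightarrow> l < b \<Longrightarrow> {f l, f (Suc l)} \<in> F" and "a \<le> b"
  shows "reach F (f a) (f b)"
  using assms
proof (induction b)
  case (Suc b)
  show ?case
  proof (cases "a = Suc b")
    case False
    then have "reach F (f a) (f b)" using Suc by simp
    moreover have "reach F (f b) (f (Suc b))" using Suc False by (intro reach_edge) simp
    ultimately show ?thesis by (rule reach_trans)
  qed simp
qed simp

lemma reach_insert_iff:
  "reach (insert {a, b} F) u v \<longleftrightarrow>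
     reach F u v \<or> (reach F u a \<and> reach F b v) \<or> (reach F u b \<and> reach F a v)"
proof
  assume "reach (insert {a, b} F) u v"
  then show "reach F u v \<or> (reach F u a \<and> reach F b v) \<or> (reach F u b \<and> reach F a v)"
    unfolding reach_def[of "insert {a, b} F"]
  proof (induction rule: rtranclp_induct)
    case (step y z)
    from step(2) have "(y = a \<and> z = b) \<or> (y = b \<and> z = a) \<or> reach F y z"
      by (metis adj_def doubleton_eq_iff insert_iff reach_edge)
    then show ?case using step(3) by (metis reach_trans reach_refl)
  qed simp
next
  have "reach (insert {a, b} F) a b" "reach (insert {a, b} F) b a"
    by (auto intro!: reach_edge simp: insert_commute)
  moreover have "reach F s t \<Longrightarrow> reach (insert {a, b} F) s t" for s t
    by (erule reach_mono) blast
  moreover assume "reach F u v \<or> (reach F u a \<and> reach F b v) \<or> (reach F u b \<and> reach F a v)"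
  ultimately show "reach (insert {a, b} F) u v" by (meson reach_trans)
qed

lemma reach_isolated: "reach F q v \<Longrightarrow> \<forall>e\<in>F. q \<notin> e \<Longrightarrow> v = q"
  unfolding reach_def by (induction rule: rtranclp_induct) (auto simp: adj_def)

lemma reach_insert_redundant:
  assumes "reach F a b"
  shows "reach (insert {a, b} F) = reach F"
proof (intro ext)
  fix u v
  show "reach (insert {a, b} F) u v = reach F u v"
    unfolding reach_insert_iff using assms reach_sym[OF assms] by (meson reach_trans)
qed

lemma not_reach_insert_pendant:
  assumes "\<not> reach F u v" "\<forall>e\<in>F. q \<notin> e" "q \<noteq> v"
  shows "\<not> reach (insert {q, u} F) q v"
  unfolding reach_insert_iff using assms reach_isolated[of F q v] by auto

lemma reach_iff_reach_from:
  "reach F u a \<Longrightarrow> reach F u v \<longleftrightarrow> reach F a v"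
  using reach_trans[of F u a v] reach_trans[of F a u v] reach_sym[of F u a] by blast

lemma component_eq_iff: "component F u = component F v \<longleftrightarrow> reach F u v"
proof
  assume "component F u = component F v"
  then show "reach F u v" unfolding component_def by (metis mem_Collect_eq reach_refl)
next
  assume "reach F u v"
  then have "reach F u x \<longleftrightarrow> reach F v x" for x by (rule reach_iff_reach_from)
  then show "component F u = component F v" unfolding component_def by blast
qed

lemma in_component: "u \<in> component F u"
  by (simp add: component_def)

lemma component_isolated: "\<forall>e\<in>F. u \<notin> e \<Longrightarrow> component F u = {u}"
  unfolding component_def using reach_isolated by fastforce

lemma num_components_cong: "reach F = reach F' \<Longrightarrow> num_components X F = num_components X F'"
  by (simp add: num_components_def component_def)

lemma num_components_insert_redundant:
  "reach F a b \<Longrightarrow> num_components X (insert {a, b} F) = num_components X F"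
  by (intro num_components_cong reach_insert_redundant)

lemma num_components_add_isolated:
  assumes "finite U" "X \<subseteq> U" "\<forall>e\<in>F. e \<subseteq> X"
  shows "num_components U F = num_components X F + card (U - X)"
proof -
  have single: "component F u = {u}" if "u \<in> U - X" for u
    using that assms(3) by (intro component_isolated) blast
  have apart: "component F x \<noteq> component F u" if "x \<in> X" "u \<in> U - X" for x u
    using in_component[of x F] single[OF that(2)] that by auto
  have "component F ` (U - X) = (\<lambda>u. {u}) ` (U - X)" using single by simp
  then have "card (component F ` (U - X)) = card (U - X)"
    by (simp add: card_image)
  moreover have "component F ` X \<inter> component F ` (U - X) = {}"
    using apart by blast
  moreover have "component F ` U = component F ` X \<union> component F ` (U - X)"
    using assms(2) by blast
  moreover have "finite X" using assms(1,2) by (rule finite_subset[rotated])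
  ultimately show ?thesis
    unfolding num_components_def using assms(1) by (simp add: card_Un_disjoint)
qed

lemma num_components_empty:
  assumes "finite X"
  shows "num_components X {} = card X"
proof -
  have "num_components {} {} = 0" by (simp add: num_components_def)
  then show ?thesis using num_components_add_isolated[OF assms, of "{}" "{}"] by simp
qed

lemma num_components_eq_1:
  assumes "X \<noteq> {}" "\<forall>u\<in>X. \<forall>v\<in>X. reach F u v"
  shows "num_components X F = 1"
proof -
  obtain x where x: "x \<in> X" using assms(1) by blast
  then have "component F u = component F x" if "u \<in> X" for u
    using that x assms(2) by (simp add: component_eq_iff)
  then have "component F ` X = {component F x}" using x by blast
  then show ?thesis by (simp add: num_components_def)
qed

lemma num_components_eq_1_reach:
  assumes "num_components X F = 1" "u \<in> X" "v \<in> X"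
  shows "reach F u v"
proof -
  obtain C where "component F ` X = {C}"
    using assms(1) unfolding num_components_def by (meson card_1_singletonE)
  then have "component F u = component F v" using assms(2,3) by blast
  then show ?thesis by (simp add: component_eq_iff)
qed

lemma num_components_antimono:
  assumes "F \<subseteq> F'" "finite X"
  shows "num_components X F' \<le> num_components X F"
proof -
  define merge where "merge C = \<Union> (component F' ` C)" for C
  have "merge (component F u) = component F' u" for u
  proof -
    have "component F' v = component F' u" if "v \<in> component F u" for v
    proof -
      from that have "reach F u v" by (simp add: component_def)
      then show ?thesis unfolding component_eq_iff by (rule reach_sym[OF reach_mono[OF _ assms(1)]])
    qed
    then show ?thesis unfolding merge_def using in_component[of u F] by blast
  qed
  then have "component F' ` X = merge ` component F ` X" by (simp add: image_image)
  then show ?thesis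
    unfolding num_components_def using assms(2) by (simp add: card_image_le)
qed

lemma component_insert_edge:
  "component (insert {a, b} F) u =
     (if reach F u a \<or> reach F u b then component F a \<union> component F b else component F u)"
proof -
  have "reach (insert {a, b} F) u v \<longleftrightarrow> reach F a v \<or> reach F b v"
    if "reach F u a \<or> reach F u b" for v
  proof (cases "reach F u a")
    case True
    then show ?thesis unfolding reach_insert_iff reach_iff_reach_from[OF True] by blast
  next
    case False
    then have "reach F u b" using that by blast
    then show ?thesis
      using False unfolding reach_insert_iff reach_iff_reach_from[OF \<open>reach F u b\<close>] by blast
  qed
  moreover have "reach (insert {a, b} F) u v \<longleftrightarrow> reach F u v"
    if "\<not> (reach F u a \<or> reach F u b)" for v
    using that unfolding reach_insert_iff by blast
  ultimately show ?thesis unfolding component_def by auto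
qed

lemma num_components_insert_unreach:
  assumes "finite X" "a \<in> X" "b \<in> X" "\<not> reach F a b"
  shows "num_components X F = Suc (num_components X (insert {a, b} F))"
proof -
  let ?C = "component F" and ?I = "component F ` X"
  define merge where "merge C = (if C \<in> {?C a, ?C b} then ?C a \<union> ?C b else C)" for C
  have "component (insert {a, b} F) u = merge (?C u)" for u
    unfolding component_insert_edge merge_def by (simp add: component_eq_iff)
  then have "component (insert {a, b} F) ` X = merge ` ?I" by (simp add: image_image)
  also have "\<dots> = insert (?C a \<union> ?C b) (?I - {?C a, ?C b})"
    using assms(2,3) unfolding merge_def by auto
  finally have image: "component (insert {a, b} F) ` X = insert (?C a \<union> ?C b) (?I - {?C a, ?C b})" .
  have "?C a \<union> ?C b \<notin> ?I"
  proof
    assume "?C a \<union> ?C b \<in> ?I"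
    then obtain u where u: "?C a \<union> ?C b = ?C u" by blast
    then have "a \<in> ?C u" "b \<in> ?C u" using in_component[of a F] in_component[of b F] by auto
    then have "reach F u a" "reach F u b" by (simp_all add: component_def)
    then show False using assms(4) reach_trans[OF reach_sym] by metis
  qed
  moreover have "card {?C a, ?C b} = 2" and sub: "{?C a, ?C b} \<subseteq> ?I"
    using assms(2-4) by (auto simp: component_eq_iff)
  moreover have "card {?C a, ?C b} \<le> card ?I" using assms(1) sub by (simp add: card_mono)
  ultimately show ?thesis
    unfolding num_components_def image using assms(1) by (simp add: card_Diff_subset)
qed

lemma forest_empty: "forest {}"
  by (simp add: forest_def)

lemma forest_subset: "forest F \<Longrightarrow> F' \<subseteq> F \<Longrightarrow> forest F'"
  unfolding forest_def by (metis Diff_mono order_refl reach_mono subsetD)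

lemma forest_insert:
  assumes "forest F" "\<not> reach F a b"
  shows "forest (insert {a, b} F)"
  unfolding forest_def
proof (intro ballI allI impI notI)
  fix e x y
  assume e: "e \<in> insert {a, b} F" "e = {x, y}" and xy: "reach (insert {a, b} F - {e}) x y"
  have sub: "reach (F - {e}) s t \<Longrightarrow> reach F s t" for s t by (erule reach_mono) blast
  show False
  proof (cases "e = {a, b}")
    case True
    then have "reach F x y" by (intro reach_mono[OF xy]) blast
    moreover have "(x = a \<and> y = b) \<or> (x = b \<and> y = a)"
      using True e(2) by (simp add: doubleton_eq_iff)
    ultimately show ?thesis using assms(2) reach_sym[of F b a] by blast
  next
    case False
    then have "e \<in> F" using e(1) by simp
    have "insert {a, b} F - {e} = insert {a, b} (F - {e})" using False by blast
    then have "reach (F - {e}) x y \<or> (reach (F - {e}) x a \<and> reach (F - {e}) b y) \<or>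
        (reach (F - {e}) x b \<and> reach (F - {e}) a y)"
      using xy by (simp only: reach_insert_iff)
    moreover have "\<not> reach (F - {e}) x y" using assms(1) \<open>e \<in> F\<close> e(2) unfolding forest_def by blast
    ultimately have "(reach F x a \<and> reach F b y) \<or> (reach F x b \<and> reach F a y)"
      using sub by blast
    moreover have "reach F x y" using \<open>e \<in> F\<close> e(2) by (simp add: reach_edge)
    ultimately have "reach F a b"
      using reach_trans[of F a x y] reach_trans[of F a y b] reach_trans[of F a y x]
        reach_trans[of F a x b] reach_sym[of F x a] reach_sym[of F b y] reach_sym[of F x y]
      by blast
    then show ?thesis using assms(2) by blast
  qed
qed

lemma forest_num_components:
  assumes "finite X" "F \<subseteq> edges_on X" "forest F"
  shows "num_components X F + card F = card X"
proof -
  have "finite F" using assms(2) finite_edges_on[OF assms(1)] by (rule finite_subset)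
  then show ?thesis using assms(2,3)
  proof (induction F rule: finite_induct)
    case empty
    then show ?case using assms(1) by (simp add: num_components_empty)
  next
    case (insert e F)
    obtain a b where ab: "e = {a, b}" "a \<in> X" "b \<in> X"
      using insert.prems(1) by (auto elim: edges_onE)
    have "insert e F - {e} = F" using insert.hyps(2) by simp
    then have "\<not> reach F a b"
      using insert.prems(2) ab(1) unfolding forest_def by (metis insertI1)
    then have split: "num_components X F = Suc (num_components X (insert e F))"
      using num_components_insert_unreach[OF assms(1) ab(2,3)] ab(1) by simp
    have "forest F" using insert.prems(2) by (rule forest_subset) blast
    then have "num_components X F + card F = card X"
      using insert.prems(1) insert.IH by simp
    then show ?case using split insert.hyps by simp
  qed
qed

lemma forest_card_inter_le:
  assumes "finite X" "F \<subseteq> edges_on X" "forest F"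
  shows "card (F \<inter> H) + num_components X H \<le> card X"
proof -
  have "forest (F \<inter> H)" using assms(3) by (rule forest_subset) blast
  then have "num_components X (F \<inter> H) + card (F \<inter> H) = card X"
    using assms(1,2) by (intro forest_num_components) auto
  moreover have "num_components X H \<le> num_components X (F \<inter> H)"
    using assms(1) by (intro num_components_antimono) auto
  ultimately show ?thesis by simp
qed

lemma forest_extend:
  assumes "finite X" "H \<subseteq> edges_on X" "forest F" "F \<subseteq> H"
  shows "\<exists>F'. forest F' \<and> F \<subseteq> F' \<and> F' \<subseteq> H \<and> num_components X F' = num_components X H"
  using assms(3,4)
proof (induction "card (H - F)" arbitrary: F rule: less_induct)
  case less
  show ?case
  proof (cases "\<exists>a b. {a, b} \<in> H \<and> \<not> reach F a b")
    case True
    then obtain a b where ab: "{a, b} \<in> H" "\<not> reach F a b" by blast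
    then have new: "{a, b} \<in> H - F" using reach_edge[of a b F] by blast
    have "finite H" using assms(2) finite_edges_on[OF assms(1)] by (rule finite_subset)
    moreover have "H - insert {a, b} F = (H - F) - {{a, b}}" by blast
    ultimately have "card (H - insert {a, b} F) < card (H - F)"
      using card_Diff1_less[OF _ new] by simp
    moreover have "forest (insert {a, b} F)" using less.prems(1) ab(2) by (rule forest_insert)
    moreover have "insert {a, b} F \<subseteq> H" using ab(1) less.prems(2) by blast
    ultimately obtain F' where "forest F'" "insert {a, b} F \<subseteq> F'" "F' \<subseteq> H"
        "num_components X F' = num_components X H"
      using less.hyps by meson
    then show ?thesis by blast
  next
    case False
    then have edges: "reach F a b" if "{a, b} \<in> H" for a b using that by blast
    have "reach H u v \<longleftrightarrow> reach F u v" for u v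
    proof
      assume "reach H u v" then show "reach F u v" using edges by (rule reach_via)
    next
      assume "reach F u v" then show "reach H u v" using less.prems(2) by (rule reach_mono)
    qed
    then have "num_components X F = num_components X H" by (intro num_components_cong ext) simp
    then show ?thesis using less.prems by blast
  qed
qed

section \<open>Supermodularity of the number of components\<close>

lemma num_components_gain_insert:
  assumes "finite X" "a \<in> X" "b \<in> X"
  shows "int (num_components X (H \<union> G)) - int (num_components X G) \<le>
         int (num_components X (H \<union> insert {a, b} G)) - int (num_components X (insert {a, b} G))"
proof -
  have HG: "H \<union> insert {a, b} G = insert {a, b} (H \<union> G)" by blast
  consider "reach G a b" | "\<not> reach G a b" "reach (H \<union> G) a b" | "\<not> reach (H \<union> G) a b"
    by blast
  then show ?thesis
  proof cases
    case 1
    then have "reach (H \<union> G) a b" by (rule reach_mono) blast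
    with 1 show ?thesis unfolding HG by (simp add: num_components_insert_redundant)
  next
    case 2
    then show ?thesis
      unfolding HG
      by (simp add: num_components_insert_redundant num_components_insert_unreach[OF assms])
  next
    case 3
    then have "\<not> reach G a b" using reach_mono[of G a b "H \<union> G"] by blast
    with 3 show ?thesis unfolding HG by (simp add: num_components_insert_unreach[OF assms])
  qed
qed

lemma num_components_gain_mono:
  assumes "finite X" "G \<subseteq> G'" "G' \<subseteq> edges_on X"
  shows "int (num_components X (H \<union> G)) - int (num_components X G) \<le>
         int (num_components X (H \<union> G')) - int (num_components X G')"
proof -
  define gain where "gain G = int (num_components X (H \<union> G)) - int (num_components X G)" for G
  have "gain G \<le> gain (G \<union> D)" if "finite D" "D \<subseteq> edges_on X" for D
    using that
  proof (induction D rule: finite_induct)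
    case (insert e D)
    obtain a b where ab: "e = {a, b}" "a \<in> X" "b \<in> X"
      using insert.prems by (auto elim: edges_onE)
    then have "G \<union> insert e D = insert {a, b} (G \<union> D)" by blast
    then show ?case
      using insert num_components_gain_insert[OF assms(1) ab(2,3), of H "G \<union> D"]
      unfolding gain_def by simp
  qed simp
  moreover have "finite (G' - G)"
    using assms(3) finite_edges_on[OF assms(1)] by (meson Diff_subset finite_subset order_trans)
  moreover have "G \<union> (G' - G) = G'" using assms(2) by blast
  ultimately show ?thesis using assms(3) unfolding gain_def by (metis Diff_subset order_trans)
qed

lemma num_components_supermodular:
  assumes "finite X" "F2 \<subseteq> edges_on X"
  shows "num_components X F1 + num_components X F2 \<le>
         num_components X (F1 \<union> F2) + num_components X (F1 \<inter> F2)"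
  using num_components_gain_mono[OF assms(1) _ assms(2), of "F1 \<inter> F2" F1]
  by (simp add: Un_absorb2)

text \<open>After adding the pendant edge {q, u} to F1 \<inter> F2, the edge {q, v} still merges two
  components there but is redundant over F1, where u and v are already connected.\<close>

lemma num_components_supermodular_strict:
  assumes "finite X" "F2 \<subseteq> edges_on X" "{q, u} \<in> F2" "{q, v} \<in> F2"
    and "reach F1 u v" "\<not> reach (insert {q, u} (F1 \<inter> F2)) q v"
  shows "num_components X F1 + num_components X F2 <
         num_components X (F1 \<union> F2) + num_components X (F1 \<inter> F2)"
proof -
  define gain where "gain G = int (num_components X (F1 \<union> G)) - int (num_components X G)" for G
  let ?G1 = "insert {q, u} (F1 \<inter> F2)"
  let ?G2 = "insert {q, v} ?G1"
  have sub: "?G1 \<subseteq> F2" "?G2 \<subseteq> F2" using assms(3,4) by auto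
  have qv: "q \<in> X" "v \<in> X" using assms(2,4) unfolding edges_on_def by blast+
  have "reach (F1 \<union> ?G1) q u" by (rule reach_edge) blast
  moreover have "reach (F1 \<union> ?G1) u v" using assms(5) by (rule reach_mono) blast
  ultimately have "reach (F1 \<union> ?G1) q v" by (rule reach_trans)
  moreover have "F1 \<union> ?G2 = insert {q, v} (F1 \<union> ?G1)" by blast
  ultimately have "num_components X (F1 \<union> ?G2) = num_components X (F1 \<union> ?G1)"
    by (simp add: num_components_insert_redundant)
  moreover have "num_components X ?G1 = Suc (num_components X ?G2)"
    by (rule num_components_insert_unreach[OF assms(1) qv assms(6)])
  ultimately have "gain ?G2 = gain ?G1 + 1" unfolding gain_def by simp
  moreover have "gain (F1 \<inter> F2) \<le> gain ?G1"
    unfolding gain_def using sub(1) assms(2) by (intro num_components_gain_mono[OF assms(1)]) auto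
  moreover have "gain ?G2 \<le> gain F2"
    unfolding gain_def using sub(2) assms(2) by (intro num_components_gain_mono[OF assms(1)]) auto
  moreover have "F1 \<union> (F1 \<inter> F2) = F1" by blast
  ultimately show ?thesis unfolding gain_def by simp
qed

section \<open>The spanning tree game, holes and diamonds\<close>

lemma submodular_game_two_points:
  assumes "submodular_game (V - {r}) (spanning_tree_game r w)"
    and "r \<in> Y" "Y \<subseteq> V" "p \<in> V" "q \<in> V" "p \<noteq> q"
  shows "mst w (insert p (insert q Y)) + mst w Y \<le> mst w (insert p Y) + mst w (insert q Y)"
proof -
  define A where "A = insert p Y - {r}"
  define B where "B = insert q Y - {r}"
  have "A \<subseteq> V - {r}" "B \<subseteq> V - {r}" using assms(3-5) unfolding A_def B_def by auto
  then have "spanning_tree_game r w (A \<union> B) + spanning_tree_game r w (A \<inter> B) \<le>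
             spanning_tree_game r w A + spanning_tree_game r w B"
    using assms(1) unfolding submodular_game_def by blast
  moreover have "A \<union> {r} = insert p Y" "B \<union> {r} = insert q Y"
    "A \<union> B \<union> {r} = insert p (insert q Y)" "A \<inter> B \<union> {r} = Y"
    using assms(2,6) unfolding A_def B_def by auto
  ultimately show ?thesis unfolding spanning_tree_game_def by simp
qed

lemma mod_add_left_cancel_nat: "(t + a) mod m = (t + b) mod m \<longleftrightarrow> a mod m = b mod (m :: nat)"
  using cong_add_lcancel_nat[of t a b m] unfolding cong_def .

lemma hole_rotate:
  assumes "hole V F cs"
  shows "hole V F (rotate t cs)"
proof -
  let ?m = "length cs"
  have m: "0 < ?m" and adj: "\<And>i j. i < ?m \<Longrightarrow> j < ?m \<Longrightarrow> i \<noteq> j \<Longrightarrow>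
      {cs ! i, cs ! j} \<in> F \<longleftrightarrow> j = Suc i mod ?m \<or> i = Suc j mod ?m"
    using assms unfolding hole_def by auto
  have shift: "(t + j) mod ?m = Suc ((t + i) mod ?m) mod ?m \<longleftrightarrow> j = Suc i mod ?m" if "j < ?m" for i j
  proof -
    have "Suc ((t + i) mod ?m) mod ?m = (t + Suc i) mod ?m" by (simp add: mod_Suc_eq)
    moreover have "(t + j) mod ?m = (t + Suc i) mod ?m \<longleftrightarrow> j mod ?m = Suc i mod ?m"
      by (rule mod_add_left_cancel_nat)
    ultimately show ?thesis using that by (metis mod_less)
  qed
  have "{rotate t cs ! i, rotate t cs ! j} \<in> F \<longleftrightarrow> j = Suc i mod ?m \<or> i = Suc j mod ?m"
    if "i < ?m" "j < ?m" "i \<noteq> j" for i j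
  proof -
    have "(t + i) mod ?m \<noteq> (t + j) mod ?m" using that by (simp add: mod_add_left_cancel_nat)
    then show ?thesis
      using adj[of "(t + i) mod ?m" "(t + j) mod ?m"] shift[of j i] shift[of i j] m that
      by (simp add: nth_rotate)
  qed
  then show ?thesis using assms unfolding hole_def by simp
qed

lemma hole_edges:
  assumes "hole V F cs"
  shows hole_edge_Suc: "Suc l < length cs \<Longrightarrow> {cs ! l, cs ! Suc l} \<in> F"
    and hole_edge_last: "{cs ! (length cs - 1), cs ! 0} \<in> F"
    and hole_no_chord_second_last: "{cs ! 1, cs ! (length cs - 1)} \<notin> F"
    and hole_no_chord_head: "1 < l \<Longrightarrow> l < length cs - 1 \<Longrightarrow> {cs ! 0, cs ! l} \<notin> F"
proof -
  let ?m = "length cs"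
  have m: "4 \<le> ?m" and adj: "\<And>i j. i < ?m \<Longrightarrow> j < ?m \<Longrightarrow> i \<noteq> j \<Longrightarrow>
      {cs ! i, cs ! j} \<in> F \<longleftrightarrow> j = Suc i mod ?m \<or> i = Suc j mod ?m"
    using assms unfolding hole_def by auto
  show "Suc l < ?m \<Longrightarrow> {cs ! l, cs ! Suc l} \<in> F" using adj[of l "Suc l"] by simp
  have ne: "cs \<noteq> []" using m by auto
  then show "{cs ! (?m - 1), cs ! 0} \<in> F" using adj[of "?m - 1" 0] m by simp
  have "Suc (?m - 1) = ?m" using m by simp
  then show "{cs ! 1, cs ! (?m - 1)} \<notin> F" using adj[of 1 "?m - 1"] m by simp
  show "{cs ! 0, cs ! l} \<notin> F" if "1 < l" "l < ?m - 1"
  proof -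
    have "l < ?m" "Suc l < ?m" using that by linarith+
    then show ?thesis using adj[of 0 l] that ne by simp
  qed
qed

lemma hole_nth_eq_iff:
  assumes "hole V F cs" "k < length cs" "l < length cs"
  shows "cs ! k = cs ! l \<longleftrightarrow> k = l"
  using assms unfolding hole_def by (simp add: nth_eq_iff_index_eq)

lemma hole_head_neighbours:
  assumes "hole V F cs" "{cs ! 0, n} \<in> F" "n \<in> set cs" "n \<noteq> cs ! 0"
  shows "n = cs ! 1 \<or> n = cs ! (length cs - 1)"
proof -
  obtain l where l: "l < length cs" "n = cs ! l" using assms(3) by (metis in_set_conv_nth)
  then have "l \<noteq> 0" using assms(4) by (cases l) auto
  then consider "l = 1" | "l = length cs - 1" | "1 < l" "l < length cs - 1" using l(1) by linarith
  then show ?thesis using hole_no_chord_head[OF assms(1), of l] assms(2) l(2) by cases auto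
qed

lemma hole_head_isolated:
  assumes "hole V F cs" "{r, cs ! 0} \<notin> F"
  shows "\<forall>e \<in> F \<inter> edges_on (insert r (set cs) - {cs ! 1, cs ! (length cs - 1)}). cs ! 0 \<notin> e"
proof (intro ballI notI)
  let ?S = "insert r (set cs) - {cs ! 1, cs ! (length cs - 1)}"
  fix e assume e: "e \<in> F \<inter> edges_on ?S" and "cs ! 0 \<in> e"
  then have "e \<in> edges_on ?S" by blast
  then obtain a b where "e = {a, b}" "a \<noteq> b" "a \<in> ?S" "b \<in> ?S" by (rule edges_onE)
  then obtain n where n: "e = {cs ! 0, n}" "n \<noteq> cs ! 0" "n \<in> ?S"
    using \<open>cs ! 0 \<in> e\<close> by (auto simp: insert_commute)
  moreover have "n \<noteq> r" using assms(2) e n(1) by (auto simp: insert_commute)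
  ultimately have "n \<in> set cs" "n \<noteq> cs ! 1" "n \<noteq> cs ! (length cs - 1)" by auto
  moreover have "{cs ! 0, n} \<in> F" using e n(1) by simp
  ultimately show False using hole_head_neighbours[OF assms(1)] n(2) by blast
qed

lemma hole_path:
  assumes "hole V F cs"
  shows "reach (F \<inter> edges_on (set cs - {cs ! (length cs - 1)})) (cs ! 0) (cs ! (length cs - 2))"
proof -
  let ?m = "length cs"
  have "distinct cs" "4 \<le> ?m" using assms unfolding hole_def by auto
  then have "{cs ! l, cs ! Suc l} \<in> F \<inter> edges_on (set cs - {cs ! (?m - 1)})" if "l < ?m - 2" for l
    using that hole_edge_Suc[OF assms, of l]
    by (auto simp: nth_eq_iff_index_eq intro!: doubleton_in_edges_on)
  then show ?thesis by (intro reach_path) auto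
qed

lemma induced_diamond_swap_tips: "induced_diamond V F a b c d \<Longrightarrow> induced_diamond V F b a c d"
  unfolding induced_diamond_def by (auto simp: insert_commute)

lemma chord_covers_diamondE:
  assumes "chord_covers w {c, d} [{c, a}, {a, d}] [{c, b}, {b, d}]"
  obtains s where "s \<in> {a, b}" "w {c, s} \<le> w {c, d}" "w {d, s} \<le> w {c, d}"
proof (cases "w {c, a} \<le> w {c, d} \<and> w {a, d} \<le> w {c, d}")
  case True
  then show ?thesis using that[of a] by (simp add: insert_commute)
next
  case False
  then have "w {c, b} \<le> w {c, d} \<and> w {b, d} \<le> w {c, d}"
    using assms unfolding chord_covers_def by auto
  then show ?thesis using that[of b] by (simp add: insert_commute)
qed

lemma chord_covers_swap: "chord_covers w f P1 P2 \<Longrightarrow> chord_covers w f P2 P1"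
  unfolding chord_covers_def by blast

section \<open>Minimum spanning trees by levels\<close>

locale weighted_complete_graph =
  fixes V :: "'a set" and w :: "'a set \<Rightarrow> real"
  assumes finite_V: "finite V" and edges_nonempty: "edges_on V \<noteq> {}"
begin

abbreviation K :: nat where "K \<equiv> card (w ` edges_on V)"

text \<open>Weights are indexed from 0: level_weight j is the paper's w_(j+1), and level j X is the
  edge set of G_(j+1)[X].\<close>

definition level_weight :: "nat \<Rightarrow> real" where
  "level_weight j = sorted_list_of_set (w ` edges_on V) ! j"

definition level :: "nat \<Rightarrow> 'a set \<Rightarrow> 'a set set" where
  "level j X = {e \<in> edges_on X. w e \<le> level_weight j}"

definition level_components :: "nat \<Rightarrow> 'a set \<Rightarrow> nat" where
  "level_components j X = num_components X (level j X)"

definition gap :: "nat \<Rightarrow> real" where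
  "gap j = level_weight (Suc j) - level_weight j"

text \<open>A spanning tree of X has at most card X - level_components j X edges of weight at most
  level_weight j, with equality for Kruskal's tree; writing each weight as the top weight minus
  the gaps above it turns this into the value of a minimum spanning tree.\<close>

definition kruskal_cost :: "'a set \<Rightarrow> real" where
  "kruskal_cost X = (real (card X) - 1) * level_weight (K - 1)
     - (\<Sum>j<K - 1. gap j * (real (card X) - real (level_components j X)))"

lemma finite_vertex_subset: "X \<subseteq> V \<Longrightarrow> finite X"
  using finite_V by (rule rev_finite_subset)

lemma finite_weights: "finite (w ` edges_on V)"
  using finite_V by (simp add: finite_edges_on)

lemma K_pos: "0 < K"
  using finite_weights edges_nonempty by (simp add: card_gt_0_iff)

lemma level_weight_strict_mono: "j < j' \<Longrightarrow> j' < K \<Longrightarrow> level_weight j < level_weight j'"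
  unfolding level_weight_def
  using sorted_wrt_nth_less[OF strict_sorted_list_of_set, of j j' "w ` edges_on V"] by simp

lemma level_weight_le_iff: "j < K \<Longrightarrow> j' < K \<Longrightarrow> level_weight j \<le> level_weight j' \<longleftrightarrow> j \<le> j'"
  using level_weight_strict_mono by (metis linorder_not_le nless_le order.strict_implies_order)

lemma gap_pos: "Suc j < K \<Longrightarrow> 0 < gap j"
  unfolding gap_def using level_weight_strict_mono[of j "Suc j"] by simp

lemma weight_eq_level_weight:
  assumes "e \<in> edges_on V"
  obtains m where "m < K" "w e = level_weight m"
proof -
  have "w e \<in> set (sorted_list_of_set (w ` edges_on V))" using assms finite_weights by simp
  then show ?thesis using that unfolding level_weight_def in_set_conv_nth by auto
qed

lemma weight_telescope:
  assumes "e \<in> edges_on V"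
  shows "w e = level_weight (K - 1) - (\<Sum>j<K - 1. gap j * (if w e \<le> level_weight j then 1 else 0))"
proof -
  obtain m where m: "m < K" "w e = level_weight m" using assms by (rule weight_eq_level_weight)
  have "(\<Sum>j<K - 1. gap j * (if level_weight m \<le> level_weight j then 1 else 0)) =
        (\<Sum>j<K - 1. if m \<le> j then gap j else 0)"
    using m(1) by (intro sum.cong) (auto simp: level_weight_le_iff)
  also have "\<dots> = sum gap ({..<K - 1} \<inter> {j. m \<le> j})" by (simp add: sum.inter_restrict)
  also have "{..<K - 1} \<inter> {j. m \<le> j} = {m..<K - 1}" by auto
  also have "sum gap {m..<K - 1} = level_weight (K - 1) - level_weight m"
    unfolding gap_def using m(1) by (intro sum_Suc_diff') simp
  finally show ?thesis using m(2) by simp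
qed

lemma level_subset_edges_on: "level j X \<subseteq> edges_on X"
  unfolding level_def by blast

lemma level_mono: "j \<le> j' \<Longrightarrow> j' < K \<Longrightarrow> level j X \<subseteq> level j' X"
  unfolding level_def using level_weight_le_iff[of j j'] by fastforce

lemma level_mono_vertices: "X \<subseteq> X' \<Longrightarrow> level j X \<subseteq> level j X'"
  unfolding level_def edges_on_def by auto

lemma level_restrict: "X \<subseteq> V \<Longrightarrow> e \<in> level j X \<longleftrightarrow> e \<in> level j V \<and> e \<subseteq> X"
  unfolding level_def edges_on_def by auto

lemma level_eq_inter_edges_on: "X \<subseteq> V \<Longrightarrow> level j X = level j V \<inter> edges_on X"
  unfolding level_def edges_on_def by auto

lemma level_top:
  assumes "X \<subseteq> V"
  shows "level (K - 1) X = edges_on X"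
proof -
  have "w e \<le> level_weight (K - 1)" if "e \<in> edges_on X" for e
  proof -
    have "e \<in> edges_on V" using that edges_on_mono[OF assms] by blast
    then obtain m where "m < K" "w e = level_weight m" by (rule weight_eq_level_weight)
    then show ?thesis using level_weight_le_iff[of m "K - 1"] K_pos by simp
  qed
  then show ?thesis unfolding level_def by blast
qed

lemma level_components_top:
  assumes "X \<subseteq> V" "X \<noteq> {}"
  shows "level_components (K - 1) X = 1"
proof -
  have "reach (edges_on X) u v" if "u \<in> X" "v \<in> X" for u v
    using that by (cases "u = v") (auto intro: reach_edge doubleton_in_edges_on)
  then show ?thesis
    unfolding level_components_def level_top[OF assms(1)] using assms(2)
    by (intro num_components_eq_1) auto
qed

lemma sum_weights_by_levels:
  assumes "X \<subseteq> V" "T \<subseteq> edges_on X"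
  shows "(\<Sum>e\<in>T. w e) = real (card T) * level_weight (K - 1)
           - (\<Sum>j<K - 1. gap j * real (card (T \<inter> level j X)))"
proof -
  have TV: "T \<subseteq> edges_on V" using assms edges_on_mono by blast
  then have finT: "finite T" using finite_edges_on[OF finite_V] by (rule finite_subset)
  have card_level:
    "(\<Sum>e\<in>T. if w e \<le> level_weight j then 1 else 0) = real (card (T \<inter> level j X))" for j
  proof -
    have "T \<inter> {e. w e \<le> level_weight j} = T \<inter> level j X" using assms(2) unfolding level_def by blast
    then show ?thesis
      using sum.inter_restrict[OF finT, of "\<lambda>_. 1 :: real" "{e. w e \<le> level_weight j}"] by simp
  qed
  have "(\<Sum>e\<in>T. w e) = (\<Sum>e\<in>T. level_weight (K - 1)
          - (\<Sum>j<K - 1. gap j * (if w e \<le> level_weight j then 1 else 0)))"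
    using TV weight_telescope by (intro sum.cong) auto
  also have "\<dots> = real (card T) * level_weight (K - 1)
          - (\<Sum>j<K - 1. gap j * (\<Sum>e\<in>T. if w e \<le> level_weight j then 1 else 0))"
    by (simp add: sum_subtractf sum.swap[of _ T] sum_distrib_left)
  finally show ?thesis unfolding card_level .
qed

lemma kruskal_cost_le_spanning_tree:
  assumes "X \<subseteq> V" "X \<noteq> {}" "spanning_tree X T"
  shows "kruskal_cost X \<le> (\<Sum>e\<in>T. w e)"
proof -
  have finX: "finite X" using assms(1) by (rule finite_vertex_subset)
  have T: "T \<subseteq> edges_on X" "\<forall>x\<in>X. \<forall>y\<in>X. reach T x y" "forest T"
    using assms(3) unfolding spanning_tree_iff_forest by auto
  have "num_components X T = 1" using assms(2) T(2) by (rule num_components_eq_1)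
  then have "real (card T) = real (card X) - 1"
    using forest_num_components[OF finX T(1,3)] by simp
  moreover have "gap j * real (card (T \<inter> level j X)) \<le>
      gap j * (real (card X) - real (level_components j X))" if "j < K - 1" for j
  proof -
    have "0 < gap j" using that by (intro gap_pos) linarith
    then show ?thesis using forest_card_inter_le[OF finX T(1,3), of "level j X"]
      unfolding level_components_def by (intro mult_left_mono) auto
  qed
  then have "(\<Sum>j<K - 1. gap j * real (card (T \<inter> level j X))) \<le>
             (\<Sum>j<K - 1. gap j * (real (card X) - real (level_components j X)))"
    by (intro sum_mono) simp
  ultimately show ?thesis
    unfolding sum_weights_by_levels[OF assms(1) T(1)] kruskal_cost_def by simp
qed

lemma forest_extend_level:
  assumes "X \<subseteq> V" "forest F" "F \<subseteq> level n X"
  obtains F' where "forest F'" "F \<subseteq> F'" "F' \<subseteq> level n X"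
    "card (F' \<inter> level n X) + level_components n X = card X"
proof -
  have finX: "finite X" using assms(1) by (rule finite_vertex_subset)
  obtain F' where F': "forest F'" "F \<subseteq> F'" "F' \<subseteq> level n X"
      "num_components X F' = num_components X (level n X)"
    using forest_extend[OF finX level_subset_edges_on assms(2,3)] by blast
  moreover have "F' \<subseteq> edges_on X" using F'(3) level_subset_edges_on by blast
  ultimately have "num_components X F' + card F' = card X"
    using finX by (intro forest_num_components) simp_all
  moreover have "F' \<inter> level n X = F'" using F'(3) by blast
  ultimately show ?thesis using that F' unfolding level_components_def by simp
qed

lemma forest_level_card_mono:
  assumes "X \<subseteq> V" "forest F'" "F' \<subseteq> edges_on X" "F \<subseteq> F'"
    and "card (F \<inter> level j X) + level_components j X = card X"
  shows "card (F' \<inter> level j X) + level_components j X = card X"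
proof -
  have finX: "finite X" using assms(1) by (rule finite_vertex_subset)
  have "finite F'" using finite_subset[OF assms(3) finite_edges_on[OF finX]] .
  then have "card (F \<inter> level j X) \<le> card (F' \<inter> level j X)"
    using assms(4) by (intro card_mono) auto
  then show ?thesis
    using assms(5) forest_card_inter_le[OF finX assms(3,2), of "level j X"]
    unfolding level_components_def by simp
qed

lemma kruskal_forest:
  assumes "X \<subseteq> V" "n < K"
  shows "\<exists>F. forest F \<and> F \<subseteq> level n X \<and>
           (\<forall>j\<le>n. card (F \<inter> level j X) + level_components j X = card X)"
  using assms(2)
proof (induction n)
  case 0
  obtain F where "forest F" "F \<subseteq> level 0 X" "card (F \<inter> level 0 X) + level_components 0 X = card X"
    using forest_extend_level[OF assms(1) forest_empty] by blast
  then show ?case by auto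
next
  case (Suc n)
  then obtain F where F: "forest F" "F \<subseteq> level n X"
      "\<forall>j\<le>n. card (F \<inter> level j X) + level_components j X = card X"
    by auto
  moreover have "level n X \<subseteq> level (Suc n) X" using Suc.prems by (intro level_mono) auto
  ultimately have "F \<subseteq> level (Suc n) X" by blast
  then obtain F' where F': "forest F'" "F \<subseteq> F'" "F' \<subseteq> level (Suc n) X"
      "card (F' \<inter> level (Suc n) X) + level_components (Suc n) X = card X"
    using forest_extend_level[OF assms(1) F(1)] by blast
  have "F' \<subseteq> edges_on X" using F'(3) level_subset_edges_on by blast
  then have "card (F' \<inter> level j X) + level_components j X = card X" if "j \<le> n" for j
    using that F(3) by (intro forest_level_card_mono[OF assms(1) F'(1) _ F'(2)]) simp_all
  then have "\<forall>j\<le>Suc n. card (F' \<inter> level j X) + level_components j X = card X"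
    using F'(4) le_Suc_eq by blast
  then show ?case using F'(1,3) by blast
qed

lemma kruskal_tree:
  assumes "X \<subseteq> V" "X \<noteq> {}"
  obtains T where "spanning_tree X T" "(\<Sum>e\<in>T. w e) = kruskal_cost X"
proof -
  have finX: "finite X" using assms(1) by (rule finite_vertex_subset)
  obtain T where T: "forest T" "T \<subseteq> level (K - 1) X"
      and levels: "\<forall>j\<le>K - 1. card (T \<inter> level j X) + level_components j X = card X"
    using kruskal_forest[OF assms(1), of "K - 1"] K_pos by auto
  have TE: "T \<subseteq> edges_on X" using T(2) level_top[OF assms(1)] by simp
  have "T \<inter> level (K - 1) X = T" using T(2) by blast
  then have "card T + level_components (K - 1) X = card X" using levels by force
  then have card_T: "real (card T) = real (card X) - 1" and connected: "num_components X T = 1"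
    using level_components_top[OF assms] forest_num_components[OF finX TE T(1)] by simp_all
  then have "spanning_tree X T"
    unfolding spanning_tree_iff_forest
    using TE T(1) num_components_eq_1_reach[OF connected] by blast
  moreover have "(\<Sum>j<K - 1. gap j * real (card (T \<inter> level j X))) =
                 (\<Sum>j<K - 1. gap j * (real (card X) - real (level_components j X)))"
  proof (intro sum.cong refl)
    fix j assume "j \<in> {..<K - 1}"
    then have "card (T \<inter> level j X) + level_components j X = card X" using levels by simp
    then have "real (card (T \<inter> level j X)) + real (level_components j X) = real (card X)"
      by (metis of_nat_add)
    then show "gap j * real (card (T \<inter> level j X)) =
        gap j * (real (card X) - real (level_components j X))"
      by (simp add: eq_diff_eq)
  qed
  then have "(\<Sum>e\<in>T. w e) = kruskal_cost X"
    unfolding sum_weights_by_levels[OF assms(1) TE] kruskal_cost_def card_T by simp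
  ultimately show ?thesis using that by blast
qed

lemma mst_eq_kruskal_cost:
  assumes "X \<subseteq> V" "X \<noteq> {}"
  shows "mst w X = kruskal_cost X"
proof -
  have "{T. spanning_tree X T} \<subseteq> Pow (edges_on X)" by (auto simp: spanning_tree_def)
  moreover have "finite (Pow (edges_on X))"
    using finite_vertex_subset[OF assms(1)] by (simp add: finite_edges_on)
  ultimately have "finite {T. spanning_tree X T}" by (rule finite_subset)
  moreover obtain T where "spanning_tree X T" "(\<Sum>e\<in>T. w e) = kruskal_cost X"
    using kruskal_tree[OF assms] .
  ultimately show ?thesis
    unfolding mst_def using kruskal_cost_le_spanning_tree[OF assms]
    by (intro Min_eqI) force+
qed

lemma kruskal_cost_difference:
  assumes "card A + card B = card C + card D"
  shows "kruskal_cost A + kruskal_cost B - kruskal_cost C - kruskal_cost D =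
    (\<Sum>j<K - 1. gap j * (real (level_components j A) + real (level_components j B)
                          - real (level_components j C) - real (level_components j D)))"
proof -
  have cost: "kruskal_cost X = (real (card X) - 1) * level_weight (K - 1)
      - real (card X) * (\<Sum>j<K - 1. gap j) + (\<Sum>j<K - 1. gap j * real (level_components j X))" for X
    unfolding kruskal_cost_def
    by (simp add: sum_subtractf sum_distrib_left right_diff_distrib mult.commute)
  have "real (card A) + real (card B) = real (card C) + real (card D)"
    using assms by (metis of_nat_add)
  then have scale:
    "real (card A) * x + real (card B) * x = real (card C) * x + real (card D) * x" for x
    by (metis distrib_right)
  show ?thesis
    unfolding cost using scale[of "level_weight (K - 1)"] scale[of "\<Sum>j<K - 1. gap j"]
    by (simp add: sum.distrib sum_subtractf algebra_simps)
qed

lemma level_insert_insert: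
  "level j (insert p (insert q Y)) \<subseteq> insert {p, q} (level j (insert p Y) \<union> level j (insert q Y))"
  unfolding level_def by (auto elim!: edges_onE simp: doubleton_in_edges_on)

lemma num_components_level_two_points:
  assumes "Y \<subseteq> V" "p \<in> V" "q \<in> V" "s \<in> Y" "w {p, s} \<le> w {p, q}" "w {q, s} \<le> w {p, q}"
  defines "U \<equiv> insert p (insert q Y)"
  shows "num_components U (level j U) =
         num_components U (level j (insert p Y) \<union> level j (insert q Y))"
proof -
  let ?L = "level j (insert p Y) \<union> level j (insert q Y)"
  have sub: "?L \<subseteq> level j U"
    unfolding U_def by (intro Un_least level_mono_vertices) blast+
  have sup: "level j U \<subseteq> insert {p, q} ?L"
    unfolding U_def by (rule level_insert_insert)
  show ?thesis
  proof (cases "{p, q} \<in> level j U")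
    case False
    then have "level j U = ?L" using sub sup by blast
    then show ?thesis by simp
  next
    case True
    then have light: "w {p, q} \<le> level_weight j" unfolding level_def by simp
    have "reach ?L p s"
    proof (cases "p = s")
      case False
      then have "{p, s} \<in> level j (insert p Y)"
        using assms(4,5) light unfolding level_def by (auto intro!: doubleton_in_edges_on)
      then show ?thesis by (intro reach_edge) blast
    qed simp
    moreover have "reach ?L s q"
    proof (cases "q = s")
      case False
      then have "{s, q} \<in> level j (insert q Y)"
        using assms(4,6) light unfolding level_def
        by (auto intro!: doubleton_in_edges_on simp: insert_commute)
      then show ?thesis by (intro reach_edge) blast
    qed simp
    ultimately have "reach ?L p q" by (rule reach_trans)
    moreover have "level j U = insert {p, q} ?L" using True sub sup by blast
    ultimately show ?thesis by (simp add: num_components_insert_redundant)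
  qed
qed

lemma num_components_level_extend:
  assumes "X \<subseteq> U" "U \<subseteq> V"
  shows "num_components U (level j X) = level_components j X + card (U - X)"
  unfolding level_components_def using finite_vertex_subset[OF assms(2)] assms(1)
  by (rule num_components_add_isolated) (auto simp: level_def edges_on_def)

lemma level_inter_two_points:
  assumes "p \<notin> Y" "q \<notin> Y" "p \<noteq> q"
  shows "level j (insert p Y) \<inter> level j (insert q Y) = level j Y"
  using assms unfolding level_def edges_on_def by auto

lemma num_components_two_points:
  fixes j :: nat
  assumes "Y \<subseteq> V" "p \<in> V - Y" "q \<in> V - Y" "p \<noteq> q"
    and "s \<in> Y" "w {p, s} \<le> w {p, q}" "w {q, s} \<le> w {p, q}"
  defines "U \<equiv> insert p (insert q Y)"
    and "L1 \<equiv> level j (insert p Y)" and "L2 \<equiv> level j (insert q Y)"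
  shows "num_components U L1 = level_components j (insert p Y) + 1"
    and "num_components U L2 = level_components j (insert q Y) + 1"
    and "num_components U (L1 \<union> L2) = level_components j U"
    and "num_components U (L1 \<inter> L2) = level_components j Y + 2"
proof -
  have UV: "U \<subseteq> V" using assms(1-3) unfolding U_def by blast
  have inter: "L1 \<inter> L2 = level j Y"
    unfolding L1_def L2_def using assms(2-4) by (intro level_inter_two_points) auto
  have extend: "num_components U (level j X) = level_components j X + card (U - X)"
    if "X \<subseteq> U" for X
    using that UV by (rule num_components_level_extend)
  have "insert p Y \<subseteq> U" "U - insert p Y = {q}" "insert q Y \<subseteq> U" "U - insert q Y = {p}"
    "Y \<subseteq> U" "U - Y = {p, q}"
    using assms(2-4) unfolding U_def by auto
  then show "num_components U L1 = level_components j (insert p Y) + 1"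
    and "num_components U L2 = level_components j (insert q Y) + 1"
    and "num_components U (L1 \<inter> L2) = level_components j Y + 2"
    using extend inter assms(4) unfolding L1_def L2_def by simp_all
  show "num_components U (L1 \<union> L2) = level_components j U"
    using num_components_level_two_points[OF assms(1) _ _ assms(5-7)] assms(2,3)
    unfolding level_components_def U_def L1_def L2_def by simp
qed

lemma level_components_two_points_le:
  assumes "Y \<subseteq> V" "p \<in> V - Y" "q \<in> V - Y" "p \<noteq> q"
    and "s \<in> Y" "w {p, s} \<le> w {p, q}" "w {q, s} \<le> w {p, q}"
  shows "level_components j (insert p Y) + level_components j (insert q Y) \<le>
         level_components j (insert p (insert q Y)) + level_components j Y"
proof -
  let ?U = "insert p (insert q Y)" and ?L1 = "level j (insert p Y)" and ?L2 = "level j (insert q Y)"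
  have "finite ?U" using assms(1-3) by (intro finite_vertex_subset) blast
  moreover have "?L2 \<subseteq> edges_on ?U"
    using level_subset_edges_on edges_on_mono[of "insert q Y" ?U] by blast
  ultimately have "num_components ?U ?L1 + num_components ?U ?L2 \<le>
      num_components ?U (?L1 \<union> ?L2) + num_components ?U (?L1 \<inter> ?L2)"
    by (rule num_components_supermodular)
  then show ?thesis using num_components_two_points[OF assms, of j] by simp
qed

lemma level_components_two_points_less:
  assumes "Y \<subseteq> V" "p \<in> V - Y" "q \<in> V - Y" "p \<noteq> q"
    and "s \<in> Y" "w {p, s} \<le> w {p, q}" "w {q, s} \<le> w {p, q}"
    and "u \<in> Y" "v \<in> Y" "{q, u} \<in> level j V" "{q, v} \<in> level j V"
    and "\<not> reach (level j Y) u v" "reach (level j (insert p Y)) u v"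
  shows "level_components j (insert p Y) + level_components j (insert q Y) <
         level_components j (insert p (insert q Y)) + level_components j Y"
proof -
  let ?U = "insert p (insert q Y)" and ?L1 = "level j (insert p Y)" and ?L2 = "level j (insert q Y)"
  have "finite ?U" using assms(1-3) by (intro finite_vertex_subset) blast
  moreover have "?L2 \<subseteq> edges_on ?U"
    using level_subset_edges_on edges_on_mono[of "insert q Y" ?U] by blast
  moreover have "{q, u} \<in> ?L2" "{q, v} \<in> ?L2"
    using assms(1,3,8-11) level_restrict[of "insert q Y"] by auto
  moreover have "\<not> reach (insert {q, u} (?L1 \<inter> ?L2)) q v"
  proof -
    have "?L1 \<inter> ?L2 = level j Y" using assms(2-4) by (intro level_inter_two_points) auto
    moreover have "\<forall>e\<in>level j Y. q \<notin> e" using assms(3) unfolding level_def edges_on_def by auto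
    ultimately show ?thesis using assms(3,9,12) by (metis DiffD2 not_reach_insert_pendant)
  qed
  ultimately have "num_components ?U ?L1 + num_components ?U ?L2 <
      num_components ?U (?L1 \<union> ?L2) + num_components ?U (?L1 \<inter> ?L2)"
    using assms(13) by (intro num_components_supermodular_strict)
  then show ?thesis using num_components_two_points[OF assms(1-7), of j] by simp
qed

section \<open>Bad holes and bad diamonds\<close>

lemma merge_contradicts_submodularity:
  assumes "r \<in> Y" "Y \<subseteq> V" "p \<in> V - Y" "q \<in> V - Y" "p \<noteq> q"
    and "s \<in> Y" "w {p, s} \<le> w {p, q}" "w {q, s} \<le> w {p, q}"
    and "i < K - 1" "u \<in> Y" "v \<in> Y" "{q, u} \<in> level i V" "{q, v} \<in> level i V"
    and "\<not> reach (level i Y) u v" "reach (level i (insert p Y)) u v"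
  shows "\<not> submodular_game (V - {r}) (spanning_tree_game r w)"
proof
  assume submodular: "submodular_game (V - {r}) (spanning_tree_game r w)"
  let ?U = "insert p (insert q Y)"
  define D where "D j = real (level_components j (insert p Y))
      + real (level_components j (insert q Y)) - real (level_components j ?U)
      - real (level_components j Y)" for j
  have "mst w X = kruskal_cost X" if "X \<in> {?U, Y, insert p Y, insert q Y}" for X
    using that assms(1-4) by (intro mst_eq_kruskal_cost) auto
  then have "0 \<le> kruskal_cost (insert p Y) + kruskal_cost (insert q Y)
      - kruskal_cost ?U - kruskal_cost Y"
    using submodular_game_two_points[OF submodular assms(1,2) _ _ assms(5)] assms(3,4) by simp
  also have "\<dots> = (\<Sum>j<K - 1. gap j * D j)"
    unfolding D_def using finite_vertex_subset[OF assms(2)] assms(3-5)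
    by (intro kruskal_cost_difference) simp
  finally have "0 \<le> (\<Sum>j<K - 1. gap j * D j)" .
  moreover have "(\<Sum>j<K - 1. gap j * D j) < (\<Sum>j<K - 1. 0)"
  proof (rule sum_strict_mono_ex1)
    have "D j \<le> 0" for j
      using level_components_two_points_le[OF assms(2-8), of j] unfolding D_def by linarith
    moreover have "0 < gap j" if "j \<in> {..<K - 1}" for j using that by (intro gap_pos) auto
    ultimately show "\<forall>j\<in>{..<K - 1}. gap j * D j \<le> 0"
      by (meson less_imp_le mult_nonneg_nonpos)
    have "D i < 0"
      using level_components_two_points_less[OF assms(2-8,10-15)] unfolding D_def by linarith
    moreover have "0 < gap i" using assms(9) by (intro gap_pos) auto
    ultimately show "\<exists>j\<in>{..<K - 1}. gap j * D j < 0"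
      using assms(9) by (intro bexI[of _ i]) (simp_all add: mult_pos_neg)
  qed simp
  ultimately show False by simp
qed

lemma hole_missing_chord_heavier:
  assumes "hole V (level i V) cs"
  defines "y \<equiv> cs ! 1" and "z \<equiv> cs ! (length cs - 1)"
  shows "w {y, cs ! 0} \<le> w {y, z}" and "w {z, cs ! 0} \<le> w {y, z}"
proof -
  have m: "4 \<le> length cs" and "set cs \<subseteq> V" using assms(1) unfolding hole_def by auto
  then have "y \<noteq> z" "y \<in> V" "z \<in> V"
    using hole_nth_eq_iff[OF assms(1), of 1 "length cs - 1"] unfolding y_def z_def
    by (auto dest!: nth_mem)
  then have "level_weight i < w {y, z}"
    using hole_no_chord_second_last[OF assms(1)] unfolding y_def z_def level_def
    by (auto simp: doubleton_in_edges_on)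
  moreover have "{cs ! 0, y} \<in> level i V" "{z, cs ! 0} \<in> level i V"
    using hole_edge_Suc[OF assms(1), of 0] hole_edge_last[OF assms(1)] m
    unfolding y_def z_def by auto
  ultimately show "w {y, cs ! 0} \<le> w {y, z}" "w {z, cs ! 0} \<le> w {y, z}"
    unfolding level_def by (auto simp: insert_commute)
qed

lemma hole_path_level:
  assumes "hole V (level i V) cs" "set cs - {cs ! (length cs - 1)} \<subseteq> X" "X \<subseteq> V"
  shows "reach (level i X) (cs ! 0) (cs ! (length cs - 2))"
proof -
  have "level i V \<inter> edges_on (set cs - {cs ! (length cs - 1)}) \<subseteq> level i X"
    using level_eq_inter_edges_on[OF assms(3), of i] edges_on_mono[OF assms(2)] by blast
  then show ?thesis using hole_path[OF assms(1)] by (rule reach_mono[rotated])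
qed

lemma hole_head_adjacent_to_root:
  assumes "r \<in> V" "submodular_game (V - {r}) (spanning_tree_game r w)" "i < K - 1"
    and hole: "hole V (level i V) cs" and "cs ! 0 \<noteq> r"
  shows "{r, cs ! 0} \<in> level i V"
proof (rule ccontr)
  assume rx: "{r, cs ! 0} \<notin> level i V"
  let ?F = "level i V"
  define m where "m = length cs"
  have m: "4 \<le> m" and csV: "set cs \<subseteq> V" using hole unfolding hole_def m_def by auto
  define x y z v where "x = cs ! 0" and "y = cs ! 1" and "z = cs ! (m - 1)" and "v = cs ! (m - 2)"
  define Y where "Y = insert r (set cs) - {y, z}"
  have "cs ! k = cs ! l \<longleftrightarrow> k = l" if "k < m" "l < m" for k l
    using hole_nth_eq_iff[OF hole] that unfolding m_def by blast
  then have distinct: "x \<noteq> y" "x \<noteq> z" "y \<noteq> z" "v \<noteq> y" "v \<noteq> z" "x \<noteq> v"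
    unfolding x_def y_def z_def v_def using m by auto
  have in_cs: "x \<in> set cs" "y \<in> set cs" "z \<in> set cs" "v \<in> set cs"
    unfolding x_def y_def z_def v_def using m by (auto simp: m_def intro!: nth_mem)
  have zx: "{z, x} \<in> ?F" and "{x, y} \<in> ?F" and "Suc (m - 2) = m - 1"
    using hole_edge_last[OF hole] hole_edge_Suc[OF hole, of 0] m
    unfolding x_def y_def z_def m_def by auto
  then have xy: "{y, x} \<in> ?F" and zv: "{z, v} \<in> ?F"
    using hole_edge_Suc[OF hole, of "m - 2"] m
    unfolding z_def v_def m_def by (auto simp: insert_commute)
  have light: "w {y, x} \<le> w {y, z}" "w {z, x} \<le> w {y, z}"
    using hole_missing_chord_heavier[OF hole] unfolding x_def y_def z_def m_def by auto
  have "r \<noteq> y" "r \<noteq> z" using rx xy zx unfolding x_def by (auto simp: insert_commute)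
  then have Y: "r \<in> Y" "x \<in> Y" "v \<in> Y" "Y \<subseteq> V" "y \<in> V - Y" "z \<in> V - Y"
    unfolding Y_def using distinct in_cs csV assms(1) by auto
  have "level i Y = ?F \<inter> edges_on Y" using Y(4) by (rule level_eq_inter_edges_on)
  then have "\<forall>e\<in>level i Y. x \<notin> e"
    using hole_head_isolated[OF hole rx] unfolding x_def y_def z_def Y_def m_def by (simp only:)
  then have "\<not> reach (level i Y) x v" using reach_isolated distinct(6) by metis
  moreover have "reach (level i (insert y Y)) x v"
  proof -
    have "set cs - {z} \<subseteq> insert y Y" "insert y Y \<subseteq> V" using Y(4,5) unfolding Y_def by blast+
    then show ?thesis using hole_path_level[OF hole] unfolding x_def z_def v_def m_def by blast
  qed
  ultimately have "\<not> submodular_game (V - {r}) (spanning_tree_game r w)"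
    using merge_contradicts_submodularity[OF Y(1,4,5,6) distinct(3) Y(2) light assms(3) Y(2,3)
        zx zv]
    by blast
  then show False using assms(2) by contradiction
qed

lemma hole_vertex_adjacent_to_root:
  assumes "r \<in> V" "submodular_game (V - {r}) (spanning_tree_game r w)" "i < K - 1"
    and "hole V (level i V) cs" "x \<in> set cs" "x \<noteq> r"
  shows "{r, x} \<in> level i V"
proof -
  obtain t where "t < length cs" "cs ! t = x" using assms(5) by (metis in_set_conv_nth)
  then have "rotate t cs ! 0 = x" using nth_rotate[of 0 cs t] by (cases cs) simp_all
  then show ?thesis
    using hole_head_adjacent_to_root[OF assms(1-3) hole_rotate[OF assms(4), of t]] assms(6) by simp
qed

lemma diamond_tip_adjacent_to_root:
  assumes "r \<in> V" "submodular_game (V - {r}) (spanning_tree_game r w)" "i < K - 1"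
    and diamond: "induced_diamond V (level i V) a b c d"
    and covered: "chord_covers w {c, d} [{c, a}, {a, d}] [{c, b}, {b, d}]" and "a \<noteq> r"
  shows "{r, a} \<in> level i V"
proof (rule ccontr)
  assume ra: "{r, a} \<notin> level i V"
  let ?F = "level i V"
  have abcd: "distinct [a, b, c, d]" "{a, b, c, d} \<subseteq> V" "{a, c} \<in> ?F" "{d, a} \<in> ?F"
      "{b, c} \<in> ?F" "{d, b} \<in> ?F" "{a, b} \<notin> ?F"
    using diamond unfolding induced_diamond_def by (auto simp: insert_commute)
  define Y where "Y = {a, b, r}"
  have "r \<noteq> c" "r \<noteq> d" using ra abcd(3,4) by (auto simp: insert_commute)
  then have Y: "r \<in> Y" "a \<in> Y" "b \<in> Y" "Y \<subseteq> V" "c \<in> V - Y" "d \<in> V - Y"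
    unfolding Y_def using abcd(1,2) assms(1) by auto
  obtain s where "s \<in> {a, b}" "w {c, s} \<le> w {c, d}" "w {d, s} \<le> w {c, d}"
    using covered by (rule chord_covers_diamondE)
  then have s: "s \<in> Y" "w {c, s} \<le> w {c, d}" "w {d, s} \<le> w {c, d}" unfolding Y_def by auto
  have "a \<notin> e" if e: "e \<in> level i Y" for e
  proof
    assume "a \<in> e"
    obtain x y where "e = {x, y}" "x \<noteq> y" "x \<in> Y" "y \<in> Y"
      using subsetD[OF level_subset_edges_on e] by (rule edges_onE)
    then have "e = {a, b} \<or> e = {r, a}" using \<open>a \<in> e\<close> unfolding Y_def by auto
    moreover have "e \<in> ?F" using e level_restrict[OF Y(4), of e i] by simp
    ultimately show False using abcd(7) ra by auto
  qed
  then have "\<not> reach (level i Y) a b" using reach_isolated[of "level i Y" a b] abcd(1) by auto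
  moreover have "reach (level i (insert c Y)) a b"
  proof -
    have "insert c Y \<subseteq> V" using Y(4,5) by blast
    then have "{a, c} \<in> level i (insert c Y)" "{c, b} \<in> level i (insert c Y)"
      using abcd(3,5) Y(2,3) level_restrict[of "insert c Y"] by (auto simp: insert_commute)
    then show ?thesis by (meson reach_edge reach_trans)
  qed
  ultimately have "\<not> submodular_game (V - {r}) (spanning_tree_game r w)"
    using abcd(1)
    by (intro merge_contradicts_submodularity[OF Y(1,4-6) _ s assms(3) Y(2,3) abcd(4,6)]) auto
  then show False using assms(2) by contradiction
qed

lemma no_bad_hole:
  assumes "r \<in> V" "submodular_game (V - {r}) (spanning_tree_game r w)" "i < K - 1"
  shows "\<not> bad_hole V r (level i V) cs"
proof
  assume "bad_hole V r (level i V) cs"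
  then obtain x where "hole V (level i V) cs" "x \<in> set cs" "x \<noteq> r" "{r, x} \<notin> level i V"
    unfolding bad_hole_def by blast
  then show False using hole_vertex_adjacent_to_root[OF assms] by blast
qed

lemma no_bad_diamond:
  assumes "r \<in> V" "submodular_game (V - {r}) (spanning_tree_game r w)" "i < K - 1"
  shows "\<not> bad_diamond V r w (level i V) a b c d"
proof
  assume "bad_diamond V r w (level i V) a b c d"
  then have diamond: "induced_diamond V (level i V) a b c d"
    and covered: "chord_covers w {c, d} [{c, a}, {a, d}] [{c, b}, {b, d}]"
    and "\<exists>x\<in>{a, b}. x \<noteq> r \<and> {r, x} \<notin> level i V"
    unfolding bad_diamond_def by auto
  then consider "a \<noteq> r" "{r, a} \<notin> level i V" | "b \<noteq> r" "{r, b} \<notin> level i V"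
    by blast
  then show False
  proof cases
    case 1
    then show False using diamond_tip_adjacent_to_root[OF assms diamond covered] by blast
  next
    case 2
    then show False
      using diamond_tip_adjacent_to_root[OF assms induced_diamond_swap_tips[OF diamond]
          chord_covers_swap[OF covered]] by blast
  qed
qed

end

theorem lemma2:
  fixes N :: "'a set" and r :: 'a and w :: "'a set \<Rightarrow> real"
  assumes "finite N" and "r \<notin> N"
    and "submodular_game N (spanning_tree_game r w)"
    and "1 \<le> i" and "i < card (w ` edges_on (N \<union> {r}))"
  shows "(\<forall>cs. \<not> bad_hole (N \<union> {r}) r (level_edges (N \<union> {r}) w i) cs) \<and>
         (\<forall>a b c d. \<not> bad_diamond (N \<union> {r}) r w (level_edges (N \<union> {r}) w i) a b c d)"
proof -
  let ?V = "N \<union> {r}"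
  interpret weighted_complete_graph ?V w
    using assms(1,5) by unfold_locales auto
  have "level_edges ?V w i = level (i - 1) ?V"
    unfolding level_edges_def weight_value_def level_def level_weight_def ..
  moreover have "submodular_game (?V - {r}) (spanning_tree_game r w)"
    using assms(2,3) by (simp add: Un_Diff)
  moreover have "i - 1 < K - 1" using assms(4,5) by linarith
  ultimately show ?thesis using no_bad_hole no_bad_diamond by simp
qed

end
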